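(* Let $\Lambda=(0,\infty)$ and let $\chi\colon\Lambda\to\mathbb{R}^3_+$ be continuous, bounded, with $\operatorname{supp}\chi=[0,1]$ and $\chi(\lambda)\ne\mathbf{0}$ on $(0,1)$; let $\eta=\chi/\langle\mathbf{1},\chi\rangle$ on $(0,1)$, extended continuously to $[0,1]$. Let $\mathcal{P}$, $A$, $\mathcal{T}$ be as in the context. Let $\mu$ be a finite nonnegative Borel measure on $\Lambda$ with $\tilde\mu=\langle\chi(\cdot),\mathbf{1}\rangle\mu$ satisfying $\tilde\mu(\Lambda)=1$ and $\operatorname{supp}\tilde\mu=[0,1]$. Assume the spectral locus is strictly convex. Let $f,g$ be $\tilde\mu$-integrable functions with $\int f\,\mathrm{d}\tilde\mu=\int g\,\mathrm{d}\tilde\mu=1$ such that $f-g$ changes sign twice on $[0,1]$. Then $\mathbf{c}_\mu(f)\neq\mathbf{c}_\mu(g)$, where $\mathbf{c}_\mu(f)=\int_{[0,1]}f\eta\,\mathrm{d}\tilde\mu$.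
   Context: $\mathcal{P}=\{\int\chi\,\mathrm{d}\nu:\nu$ finite nonnegative Borel measure on $\Lambda\}$ is assumed to have nonempty interior; $A=\{\mathbf{x}\in\mathbb{R}^3:\langle\mathbf{x},\mathbf{1}\rangle=1\}$; $\mathcal{T}=\mathcal{P}\cap A$, regarded as a subset of $A$ with its relative topology. Fix a direction and orientation in $A$; $\angle(\mathbf{c}',\mathbf{c})$ is the angle from $\mathbf{c}$ to $\mathbf{c}'$. A cyclic interval in $[0,1]$: $[a,b]_{\mathbb{T}}=[a,b]$ if $a\le b$, $=[a,1]\cup[0,b]$ if $a>b$, and analogously for open/half-open ones. The spectral locus $\eta([0,1])$ is convex if $\eta([0,1])\subset\partial\mathcal{T}$ and for every $\mathbf{c}\in\operatorname{int}\mathcal{T}$ a continuous version of $\lambda\mapsto\angle(\eta(\lambda),\mathbf{c})$ is monotone on $[0,1]$ with $|\angle(\eta(0),\mathbf{c})-\angle(\eta(1),\mathbf{c})|\le2\pi$; it is strictly convex if moreover $\eta(\lambda)\notin[\eta(a),\eta(b)]$ for all pairwise distinct $a,b,\lambda\in[0,1]$ ($[\mathbf{x},\mathbf{y}]$ the closed segment). A $\tilde\mu$-measurable function $u$ on $[0,1]$ changes sign twice on $[0,1]$ if $\tilde\mu(\{u>0\})>0$, $\tilde\mu(\{u<0\})>0$, and there is a cyclic interval $I\subset[0,1]$ such that both $I$ and $[0,1]\setminus I$ have nonempty interior, $u\ge0$ on $I$ and $u\le0$ outside $I$. *)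

theory Defs
  imports "HOL-Analysis.Analysis"
begin

definition ones3 :: "real^3" where "ones3 = (\<chi> i. 1)"

definition Lam :: "real set" where "Lam = {0<..}"

definition Pcone :: "(real \<Rightarrow> real^3) \<Rightarrow> (real^3) set" where
  "Pcone chi = {integral\<^sup>L \<nu> chi | \<nu>. sets \<nu> = sets (restrict_space borel Lam) \<and> finite_measure \<nu>}"

definition Aplane :: "(real^3) set" where "Aplane = {x. x \<bullet> ones3 = 1}"

definition Tset :: "(real \<Rightarrow> real^3) \<Rightarrow> (real^3) set" where
  "Tset chi = Pcone chi \<inter> Aplane"

definition topA :: "(real^3) topology" where "topA = subtopology euclidean Aplane"

text \<open>Fixed orthonormal basis of the direction space of A, giving a direction and orientation;
  a vector parallel to A is mapped to a complex number.\<close>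
definition planeE1 :: "real^3" where "planeE1 = (1 / sqrt 2) *\<^sub>R vector [1, -1, 0]"
definition planeE2 :: "real^3" where "planeE2 = (1 / sqrt 6) *\<^sub>R vector [1, 1, -2]"
definition plane_coord :: "real^3 \<Rightarrow> complex" where
  "plane_coord v = Complex (v \<bullet> planeE1) (v \<bullet> planeE2)"

text \<open>\<open>\<theta>\<close> is a continuous version on [0,1] of \<open>\<lambda> \<mapsto> \<angle>(p \<lambda>, c)\<close>, the angle from c to p \<lambda>.\<close>
definition angle_version :: "(real \<Rightarrow> real^3) \<Rightarrow> real^3 \<Rightarrow> (real \<Rightarrow> real) \<Rightarrow> bool" where
  "angle_version p c \<theta> \<longleftrightarrow> continuous_on {0..1} \<theta> \<and>
     (\<forall>l\<in>{0..1}. plane_coord (p l - c) = complex_of_real (cmod (plane_coord (p l - c))) * cis (\<theta> l))"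

definition convex_locus :: "(real \<Rightarrow> real^3) \<Rightarrow> (real \<Rightarrow> real^3) \<Rightarrow> bool" where
  "convex_locus chi eta \<longleftrightarrow>
     eta ` {0..1} \<subseteq> topA frontier_of (Tset chi) \<and>
     (\<forall>c \<in> topA interior_of (Tset chi). \<exists>\<theta>. angle_version eta c \<theta> \<and>
        (mono_on {0..1} \<theta> \<or> antimono_on {0..1} \<theta>) \<and> \<bar>\<theta> 0 - \<theta> 1\<bar> \<le> 2 * pi)"

definition strictly_convex_locus :: "(real \<Rightarrow> real^3) \<Rightarrow> (real \<Rightarrow> real^3) \<Rightarrow> bool" where
  "strictly_convex_locus chi eta \<longleftrightarrow> convex_locus chi eta \<and>
     (\<forall>a\<in>{0..1}. \<forall>b\<in>{0..1}. \<forall>l\<in>{0..1}. a \<noteq> b \<and> a \<noteq> l \<and> b \<noteq> l \<longrightarrow>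
        eta l \<notin> closed_segment (eta a) (eta b))"

definition cyc_cc :: "real \<Rightarrow> real \<Rightarrow> real set" where
  "cyc_cc a b = (if a \<le> b then {a..b} else {a..1} \<union> {0..b})"
definition cyc_oo :: "real \<Rightarrow> real \<Rightarrow> real set" where
  "cyc_oo a b = (if a \<le> b then {a<..<b} else {a<..1} \<union> {0..<b})"
definition cyc_co :: "real \<Rightarrow> real \<Rightarrow> real set" where
  "cyc_co a b = (if a \<le> b then {a..<b} else {a..1} \<union> {0..<b})"
definition cyc_oc :: "real \<Rightarrow> real \<Rightarrow> real set" where
  "cyc_oc a b = (if a \<le> b then {a<..b} else {a<..1} \<union> {0..b})"

definition cyclic_interval :: "real set \<Rightarrow> bool" where
  "cyclic_interval I \<longleftrightarrow> (\<exists>a\<in>{0..1}. \<exists>b\<in>{0..1}.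
      I = cyc_cc a b \<or> I = cyc_oo a b \<or> I = cyc_co a b \<or> I = cyc_oc a b)"

text \<open>u changes sign twice on [0,1] (w.r.t. the measure M on \<open>\<Lambda>\<close>); pointwise conditions are
  imposed at points of \<open>[0,1] \<inter> \<Lambda>\<close>, where u is defined.\<close>
definition changes_sign_twice :: "real measure \<Rightarrow> (real \<Rightarrow> real) \<Rightarrow> bool" where
  "changes_sign_twice M u \<longleftrightarrow>
     emeasure M {x \<in> space M. u x > 0} > 0 \<and> emeasure M {x \<in> space M. u x < 0} > 0 \<and>
     (\<exists>I. cyclic_interval I \<and> interior I \<noteq> {} \<and> interior ({0..1} - I) \<noteq> {} \<and>
        (\<forall>x\<in>I \<inter> Lam. u x \<ge> 0) \<and> (\<forall>x\<in>({0..1} - I) \<inter> Lam. u x \<le> 0))"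

text \<open>Closed support (in R) of a measure on \<open>\<Lambda>\<close>.\<close>
definition msupp :: "real measure \<Rightarrow> real set" where
  "msupp M = {x. \<forall>e>0. emeasure M (ball x e \<inter> space M) > 0}"

definition mu_tilde :: "(real \<Rightarrow> real^3) \<Rightarrow> real measure \<Rightarrow> real measure" where
  "mu_tilde chi \<mu> = density \<mu> (\<lambda>x. ennreal (chi x \<bullet> ones3))"

definition c_mu :: "(real \<Rightarrow> real^3) \<Rightarrow> (real \<Rightarrow> real^3) \<Rightarrow> real measure \<Rightarrow> (real \<Rightarrow> real) \<Rightarrow> real^3" where
  "c_mu chi eta \<mu> f = (LINT x:{0..1}|mu_tilde chi \<mu>. f x *\<^sub>R eta x)"

end

(*
  Points of the locus lie in the plane A, which misses the origin, so three of them are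
  collinear exactly when their triple product vanishes.  Strict convexity therefore makes
  eta p . (eta q x eta r) nonzero for distinct p, q, r, and since the increasing triples form a
  connected set, its sign is the same for all p < q < r.  Consequently, if lo < hi are the
  endpoints of the cyclic interval I, the linear functional w = +-(eta lo x eta hi) is, along the
  locus, nonnegative on I, nonpositive off I and zero only at lo and hi.

  If c(f) = c(g), then u = f - g is orthogonal to every w . eta on [0,1].  For the functional
  above the integrand u (w . eta) is nonnegative, so u = 0 almost everywhere on [0,1] except at
  lo and hi; an atom at one endpoint is excluded by the functional eta b x eta z, with b the
  other endpoint and z a third point.  As the measure is carried by [0,1], u = 0 almost
  everywhere, contradicting the positivity of the measure of {u > 0}.
*)

theory Submission
  imports Defs
begin

unbundle cross3_syntax

definition independent_triples :: "(real \<Rightarrow> real^3) \<Rightarrow> bool" where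
  "independent_triples e \<longleftrightarrow> (\<forall>p\<in>{0..1}. \<forall>q\<in>{0..1}. \<forall>r\<in>{0..1}.
     p \<noteq> q \<and> p \<noteq> r \<and> q \<noteq> r \<longrightarrow> e p \<bullet> (e q \<times> e r) \<noteq> 0)"

lemma inner_ones3: "x \<bullet> ones3 = x$1 + x$2 + x$3"
  by (simp add: ones3_def inner_vec_def sum_3)

lemma inner_ones3_pos:
  assumes "\<And>i. 0 \<le> x $ i" "x \<noteq> 0"
  shows "0 < ones3 \<bullet> x"
proof -
  obtain i where "x $ i \<noteq> 0"
    using assms(2) by (auto simp: vec_eq_iff)
  then have "0 < x $ i"
    using assms(1)[of i] by linarith
  then show ?thesis
    using assms(1)[of 1] assms(1)[of 2] assms(1)[of 3] exhaust_3[of i]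
    unfolding inner_commute[of ones3] inner_ones3 by auto
qed

lemma normalized_locus_in_Aplane:
  fixes chi eta :: "real \<Rightarrow> real^3"
  assumes cont: "continuous_on {0..1} eta"
    and eta: "\<And>x. x \<in> {0<..<1} \<Longrightarrow> eta x = (1 / (ones3 \<bullet> chi x)) *\<^sub>R chi x"
    and chi: "\<And>x i. x \<in> {0<..<1} \<Longrightarrow> 0 \<le> chi x $ i" "\<And>x. x \<in> {0<..<1} \<Longrightarrow> chi x \<noteq> 0"
  shows "eta ` {0..1} \<subseteq> Aplane"
proof -
  have "eta x \<bullet> ones3 = 1" if "x \<in> closure {0<..<1::real}" for x
  proof (rule continuous_constant_on_closure[OF _ _ that])
    show "continuous_on (closure {0<..<1::real}) (\<lambda>x. eta x \<bullet> ones3)"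
      using cont by (simp add: continuous_on_inner)
    show "eta y \<bullet> ones3 = 1" if "y \<in> {0<..<1}" for y
      using eta[OF that] inner_ones3_pos[OF chi[OF that]] by (simp add: inner_commute)
  qed
  then show ?thesis
    by (auto simp: Aplane_def)
qed

lemma triple_product_rotate: "a \<bullet> (b \<times> c) = b \<bullet> (c \<times> a)"
  by (simp add: cross3_simps)

lemma triple_product_swap: "a \<bullet> (b \<times> c) = - (a \<bullet> (c \<times> b))"
  by (simp add: cross3_simps)

lemma cross_diff_Aplane:
  assumes "a \<in> Aplane" "b \<in> Aplane" "c \<in> Aplane"
  shows "(b - a) \<times> (c - a) = (a \<bullet> (b \<times> c)) *\<^sub>R ones3"
proof -
  have "a$3 = 1 - a$1 - a$2" "b$3 = 1 - b$1 - b$2" "c$3 = 1 - c$1 - c$2"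
    using assms by (auto simp: Aplane_def inner_ones3)
  then show ?thesis
    by (simp add: cross3_def inner_vec_def sum_3 vec_eq_iff forall_3 ones3_def)
      (simp add: algebra_simps)
qed

lemma Aplane_triple_product_eq_0_imp_collinear:
  assumes "a \<in> Aplane" "b \<in> Aplane" "c \<in> Aplane" "a \<bullet> (b \<times> c) = 0"
  shows "collinear {a, b, c}"
proof -
  have "collinear {0, b - a, c - a}"
    using cross_diff_Aplane[OF assms(1-3)] assms(4) by (simp add: cross_eq_0[symmetric])
  then have "collinear {b, a, c}"
    by (simp add: collinear_3)
  then show ?thesis
    by (simp add: insert_commute)
qed

lemma strictly_convex_locus_independent_triples:
  assumes strict: "strictly_convex_locus chi eta" and plane: "eta ` {0..1} \<subseteq> Aplane"
  shows "independent_triples eta"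
  unfolding independent_triples_def
proof (intro ballI impI notI)
  fix p q r :: real
  assume pqr: "p \<in> {0..1}" "q \<in> {0..1}" "r \<in> {0..1}" "p \<noteq> q \<and> p \<noteq> r \<and> q \<noteq> r"
    and "eta p \<bullet> (eta q \<times> eta r) = 0"
  then have "collinear {eta p, eta q, eta r}"
    using plane by (intro Aplane_triple_product_eq_0_imp_collinear) auto
  then have "eta p \<in> closed_segment (eta q) (eta r) \<or> eta q \<in> closed_segment (eta r) (eta p)
      \<or> eta r \<in> closed_segment (eta p) (eta q)"
    by (simp add: collinear_between_cases between_mem_segment)
  with strict pqr show False
    unfolding strictly_convex_locus_def by metis
qed

lemma connected_nonzero_same_sign:
  fixes F :: "'a::topological_space \<Rightarrow> real"
  assumes "connected S" "continuous_on S F" "\<And>x. x \<in> S \<Longrightarrow> F x \<noteq> 0" "x \<in> S" "y \<in> S"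
  shows "0 < F x * F y"
proof (rule ccontr)
  assume "\<not> 0 < F x * F y"
  then have "min (F x) (F y) \<le> 0" "0 \<le> max (F x) (F y)"
    by (auto simp: zero_less_mult_iff not_less min_def max_def)
  moreover have "connected (F ` S)"
    using assms(2,1) by (rule connected_continuous_image)
  moreover have "min (F x) (F y) \<in> F ` S" "max (F x) (F y) \<in> F ` S"
    using assms(4,5) by (auto simp: min_def max_def)
  ultimately have "0 \<in> F ` S"
    unfolding connected_iff_interval by blast
  with assms(3) show False
    by auto
qed

lemma convex_increasing_triples:
  "convex {(p, q, r). 0 \<le> (p::real) \<and> p < q \<and> q < r \<and> r \<le> 1}"
proof -
  have "{(p, q, r). 0 \<le> (p::real) \<and> p < q \<and> q < r \<and> r \<le> 1} =
      {x. (-1, 0, 0) \<bullet> x \<le> 0} \<inter> {x. (1, -1, 0) \<bullet> x < 0} \<inter> {x. (0, 1, -1) \<bullet> x < 0}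
      \<inter> {x. (0, 0, 1) \<bullet> x \<le> (1::real)}"
    by auto
  then show ?thesis
    by (simp add: convex_Int convex_halfspace_le convex_halfspace_lt)
qed

lemma independent_triples_sign:
  assumes cont: "continuous_on {0..1} e" and indep: "independent_triples e"
  obtains s :: real
  where "\<And>p q r. 0 \<le> p \<Longrightarrow> p < q \<Longrightarrow> q < r \<Longrightarrow> r \<le> 1 \<Longrightarrow> 0 < s * (e p \<bullet> (e q \<times> e r))"
proof -
  define S where "S = {(p, q, r). 0 \<le> (p::real) \<and> p < q \<and> q < r \<and> r \<le> 1}"
  define F where "F = (\<lambda>x. e (fst x) \<bullet> (e (fst (snd x)) \<times> e (snd (snd x))))"
  have e_comp: "continuous_on S (\<lambda>x. e (\<pi> x))" if "continuous_on S \<pi>" "\<pi> ` S \<subseteq> {0..1}" for \<pi>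
    using continuous_on_compose2[OF cont that] .
  have "continuous_on S F"
    unfolding F_def by (intro continuous_on_inner continuous_on_cross e_comp continuous_intros) (auto simp: S_def)
  moreover have "F x \<noteq> 0" if "x \<in> S" for x
    using indep that by (auto simp: independent_triples_def S_def F_def)
  moreover have "(0, 1/2, 1) \<in> S"
    by (simp add: S_def)
  ultimately have "0 < F (0, 1/2, 1) * F (p, q, r)" if "(p, q, r) \<in> S" for p q r
    using connected_nonzero_same_sign convex_connected convex_increasing_triples that
    unfolding S_def by blast
  then show thesis
    using that[of "F (0, 1/2, 1)"] by (simp add: S_def F_def)
qed

lemma cyclic_interval_endpoints:
  assumes "cyclic_interval I" "interior I \<noteq> {}"
  obtains lo hi where "0 \<le> lo" "lo < hi" "hi \<le> 1"
    "({lo<..<hi} \<subseteq> I \<and> I \<subseteq> {lo..hi}) \<or> ({0..1} - {lo..hi} \<subseteq> I \<and> I \<subseteq> {0..1} - {lo<..<hi})"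
proof -
  obtain a b where ab: "a \<in> {0..1}" "b \<in> {0..1}"
    "I = cyc_cc a b \<or> I = cyc_oo a b \<or> I = cyc_co a b \<or> I = cyc_oc a b"
    using assms(1) unfolding cyclic_interval_def by blast
  show ?thesis
  proof (cases "a \<le> b")
    case True
    then have sub: "{a<..<b} \<subseteq> I \<and> I \<subseteq> {a..b}"
      using ab(3) by (auto simp: cyc_cc_def cyc_oo_def cyc_co_def cyc_oc_def)
    have "a \<noteq> b"
    proof
      assume "a = b"
      then have "interior I \<subseteq> interior {a..a}"
        using sub by (intro interior_mono) auto
      then show False
        using assms(2) by simp
    qed
    then show ?thesis
      using that[of a b] True ab sub by auto
  next
    case False
    then have "{0..1} - {b..a} \<subseteq> I \<and> I \<subseteq> {0..1} - {b<..<a}"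
      using ab by (auto simp: cyc_cc_def cyc_oo_def cyc_co_def cyc_oc_def)
    then show ?thesis
      using that[of b a] False ab by auto
  qed
qed

lemma independent_triples_separating_functional:
  assumes cont: "continuous_on {0..1} e" and indep: "independent_triples e"
    and I: "cyclic_interval I" "interior I \<noteq> {}"
  obtains lo hi w where "lo \<in> {0..1}" "hi \<in> {0..1}" "lo \<noteq> hi"
    "\<And>x. x \<in> I \<Longrightarrow> 0 \<le> w \<bullet> e x" "\<And>x. x \<in> {0..1} - I \<Longrightarrow> w \<bullet> e x \<le> 0"
    "\<And>x. x \<in> {0..1} - {lo, hi} \<Longrightarrow> w \<bullet> e x \<noteq> 0"
proof -
  obtain lo hi where lh: "0 \<le> lo" "lo < hi" "hi \<le> 1" and shape:
    "({lo<..<hi} \<subseteq> I \<and> I \<subseteq> {lo..hi}) \<or> ({0..1} - {lo..hi} \<subseteq> I \<and> I \<subseteq> {0..1} - {lo<..<hi})"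
    using cyclic_interval_endpoints[OF I] by blast
  obtain s where s: "\<And>p q r. 0 \<le> p \<Longrightarrow> p < q \<Longrightarrow> q < r \<Longrightarrow> r \<le> 1 \<Longrightarrow> 0 < s * (e p \<bullet> (e q \<times> e r))"
    using independent_triples_sign[OF cont indep] by blast
  define v where "v = s *\<^sub>R (e lo \<times> e hi)"
  have v_e: "v \<bullet> e x = s * (e x \<bullet> (e lo \<times> e hi))" for x
    by (simp add: v_def inner_commute)
  have inside: "v \<bullet> e x < 0" if "lo < x" "x < hi" for x
    using s[of lo x hi] lh that triple_product_rotate[of "e x" "e lo" "e hi"]
      triple_product_swap[of "e lo" "e hi" "e x"]
    by (simp add: v_e)
  have outside: "0 < v \<bullet> e x" if "x \<in> {0..1}" "x < lo \<or> hi < x" for x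
    using s[of x lo hi] s[of lo hi x] lh that triple_product_rotate[of "e x" "e lo" "e hi"]
    by (auto simp: v_e)
  have ends: "v \<bullet> e lo = 0" "v \<bullet> e hi = 0"
    by (simp_all add: v_e dot_cross_self)
  have nonpos: "v \<bullet> e x \<le> 0" if "x \<in> {lo..hi}" for x
    using inside[of x] ends that by (cases "x = lo \<or> x = hi") auto
  have nonneg: "0 \<le> v \<bullet> e x" if "x \<in> {0..1}" "x \<notin> {lo<..<hi}" for x
    using outside[of x] ends that by (cases "x = lo \<or> x = hi") auto
  have nonzero: "v \<bullet> e x \<noteq> 0" if "x \<in> {0..1} - {lo, hi}" for x
    using inside[of x] outside[of x] that by (cases "x < lo \<or> hi < x") auto
  from shape show thesis
  proof
    assume "{lo<..<hi} \<subseteq> I \<and> I \<subseteq> {lo..hi}"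
    then have "\<And>x. x \<in> I \<Longrightarrow> x \<in> {lo..hi}" "\<And>x. x \<in> {0..1} - I \<Longrightarrow> x \<notin> {lo<..<hi}"
      by blast+
    then show thesis
      by (intro that[of lo hi "- v"]) (use lh nonpos nonneg nonzero in auto)
  next
    assume "{0..1} - {lo..hi} \<subseteq> I \<and> I \<subseteq> {0..1} - {lo<..<hi}"
    then have "\<And>x. x \<in> I \<Longrightarrow> x \<in> {0..1} - {lo<..<hi}" "\<And>x. x \<in> {0..1} - I \<Longrightarrow> x \<in> {lo..hi}"
      by blast+
    then show thesis
      by (intro that[of lo hi v]) (use lh nonpos nonneg nonzero in auto)
  qed
qed

lemma space_eq_if_sets_restrict_borel:
  assumes "sets M = sets (restrict_space borel \<Omega>)"
  shows "space M = \<Omega>"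
  using sets_eq_imp_space_eq[OF assms] by (simp add: space_restrict_space)

lemma Int_in_sets_restrict_borel:
  assumes "sets M = sets (restrict_space borel \<Omega>)" "A \<in> sets borel"
  shows "A \<inter> \<Omega> \<in> sets M"
  using assms by (auto simp: sets_restrict_space)

lemma set_integrable_scaleR_continuous:
  fixes g :: "'a::t2_space \<Rightarrow> 'b::{banach, second_countable_topology}"
  assumes M: "sets M = sets (restrict_space borel \<Omega>)"
    and S: "compact S" and g: "continuous_on S g" and h: "integrable M h"
  shows "set_integrable M S (\<lambda>x. h x *\<^sub>R g x)"
proof -
  obtain B where B: "B > 0" "\<And>x. x \<in> S \<Longrightarrow> norm (g x) \<le> B"
    using compact_imp_bounded[OF compact_continuous_image[OF g S]] by (auto simp: bounded_pos)
  have "(\<lambda>x. indicator S x *\<^sub>R g x) \<in> borel_measurable M"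
    using borel_measurable_continuous_on_indicator[OF borel_closed[OF compact_imp_closed[OF S]] g]
    by (simp add: measurable_cong_sets[OF M refl] measurable_restrict_space1)
  then have "(\<lambda>x. h x *\<^sub>R (indicator S x *\<^sub>R g x)) \<in> borel_measurable M"
    by (rule borel_measurable_scaleR[OF borel_measurable_integrable[OF h]])
  then have meas: "(\<lambda>x. indicator S x *\<^sub>R (h x *\<^sub>R g x)) \<in> borel_measurable M"
    by (simp add: mult.commute)
  have bound: "AE x in M. norm (indicator S x *\<^sub>R (h x *\<^sub>R g x)) \<le> norm (B * h x)"
  proof (intro AE_I2)
    fix x
    show "norm (indicator S x *\<^sub>R (h x *\<^sub>R g x)) \<le> norm (B * h x)"
    proof (cases "x \<in> S")
      case True
      then have "\<bar>h x\<bar> * norm (g x) \<le> \<bar>h x\<bar> * B"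
        using B(2) by (intro mult_left_mono) auto
      then show ?thesis
        using True B(1) by (simp add: abs_mult mult.commute)
    qed simp
  qed
  have "integrable M (\<lambda>x. B * h x)"
    using h by simp
  then show ?thesis
    unfolding set_integrable_def using meas bound by (rule Bochner_Integration.integrable_bound)
qed

lemma orthogonal_imp_integral_inner_eq_0:
  fixes e :: "'a::t2_space \<Rightarrow> 'b::euclidean_space"
  assumes "sets M = sets (restrict_space borel \<Omega>)" "compact S" "continuous_on S e" "integrable M u"
    and orth: "(LINT x:S|M. u x *\<^sub>R e x) = 0"
  shows "integrable M (\<lambda>x. indicator S x * (u x * (w \<bullet> e x)))"
    "integral\<^sup>L M (\<lambda>x. indicator S x * (u x * (w \<bullet> e x))) = 0"
proof -
  have int: "integrable M (\<lambda>x. indicator S x *\<^sub>R (u x *\<^sub>R e x))"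
    using set_integrable_scaleR_continuous[OF assms(1-4)] by (simp add: set_integrable_def)
  then have "integrable M (\<lambda>x. w \<bullet> (indicator S x *\<^sub>R (u x *\<^sub>R e x)))"
    by (rule integrable_inner_right)
  moreover have "(\<integral>x. w \<bullet> (indicator S x *\<^sub>R (u x *\<^sub>R e x)) \<partial>M) = w \<bullet> (LINT x:S|M. u x *\<^sub>R e x)"
    unfolding set_lebesgue_integral_def using int by (rule integral_inner_right)
  ultimately show "integrable M (\<lambda>x. indicator S x * (u x * (w \<bullet> e x)))"
    "integral\<^sup>L M (\<lambda>x. indicator S x * (u x * (w \<bullet> e x))) = 0"
    using orth by (simp_all add: mult.assoc)
qed

lemma AE_in_msupp:
  assumes M: "sets M = sets (restrict_space borel \<Omega>)"
  shows "AE x in M. x \<in> msupp M"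
proof -
  have space: "space M = \<Omega>"
    using M by (rule space_eq_if_sets_restrict_borel)
  have "\<exists>r>0. emeasure M (ball x r \<inter> \<Omega>) = 0" if "x \<notin> msupp M" for x
    using that by (auto simp: msupp_def space)
  then obtain r where r: "\<And>x. x \<notin> msupp M \<Longrightarrow> r x > 0 \<and> emeasure M (ball x (r x) \<inter> \<Omega>) = 0"
    by metis
  define \<B> where "\<B> = (\<lambda>x. ball x (r x)) ` (- msupp M)"
  obtain \<C> where \<C>: "\<C> \<subseteq> \<B>" "countable \<C>" "\<Union>\<C> = \<Union>\<B>"
    using Lindelof[of \<B>] by (auto simp: \<B>_def)
  have "(\<Union>B\<in>\<C>. B \<inter> \<Omega>) \<in> null_sets M"
  proof (rule null_sets_UN'[OF \<C>(2)])
    fix B assume "B \<in> \<C>"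
    then obtain x where "x \<notin> msupp M" "B = ball x (r x)"
      using \<C>(1) by (auto simp: \<B>_def)
    then show "B \<inter> \<Omega> \<in> null_sets M"
      using r Int_in_sets_restrict_borel[OF M] by auto
  qed
  moreover have "{x \<in> space M. x \<notin> msupp M} \<subseteq> (\<Union>B\<in>\<C>. B \<inter> \<Omega>)"
  proof
    fix x assume x: "x \<in> {x \<in> space M. x \<notin> msupp M}"
    then have "ball x (r x) \<in> \<B>" "x \<in> ball x (r x)"
      using r[of x] by (auto simp: \<B>_def)
    then have "x \<in> \<Union>\<B>"
      by blast
    then show "x \<in> (\<Union>B\<in>\<C>. B \<inter> \<Omega>)"
      using \<C>(3) x space by auto
  qed
  ultimately show ?thesis
    by (rule AE_I')
qed

lemma AE_eq_0_if_integral_eq_0_off_point: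
  fixes h :: "'a \<Rightarrow> real"
  assumes "finite_measure M" "{a} \<inter> space M \<in> sets M" "integrable M h" "integral\<^sup>L M h = 0"
    and off: "AE x in M. x \<noteq> a \<longrightarrow> h x = 0"
  shows "AE x in M. h x = 0"
proof (cases "h a = 0")
  case True
  show ?thesis
    using off by eventually_elim (use True in auto)
next
  case False
  have "AE x in M. h x = indicator ({a} \<inter> space M) x * h a"
    using off AE_space by eventually_elim (auto simp: indicator_def)
  then have "integral\<^sup>L M h = measure M ({a} \<inter> space M) * h a"
    using assms(2,3) by (subst integral_cong_AE[where g="\<lambda>x. indicator ({a} \<inter> space M) x * h a"]) auto
  then have "emeasure M ({a} \<inter> space M) = 0"
    using assms(1,4) False by (simp add: finite_measure.emeasure_eq_measure)
  then have "AE x in M. x \<noteq> a"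
    using assms(2) by (intro AE_I'[of "{a} \<inter> space M"]) auto
  with off show ?thesis
    by eventually_elim auto
qed

lemma independent_triples_orthogonal_imp_AE_eq_0_at_point:
  fixes M :: "real measure" and e :: "real \<Rightarrow> real^3" and u :: "real \<Rightarrow> real"
  assumes M: "sets M = sets (restrict_space borel \<Omega>)" "finite_measure M"
    and e: "continuous_on {0..1} e" "independent_triples e"
    and u: "integrable M u" and orth: "(LINT x:{0..1}|M. u x *\<^sub>R e x) = 0"
    and ab: "a \<in> {0..1}" "b \<in> {0..1}" "a \<noteq> b"
    and off: "AE x in M. x \<in> {0..1} - {a, b} \<longrightarrow> u x = 0"
  shows "AE x in M. x = a \<longrightarrow> u x = 0"
proof -
  have "\<exists>z\<in>{0, 1/2, 1::real}. z \<noteq> a \<and> z \<noteq> b"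
    by auto
  then obtain z where "z \<in> {0, 1/2, 1}" "z \<noteq> a" "z \<noteq> b"
    by blast
  then have z: "z \<in> {0..1}" "z \<noteq> a" "z \<noteq> b"
    by auto
  define w where "w = e b \<times> e z"
  define h where "h x = indicator {0..1} x * (u x * (w \<bullet> e x))" for x
  have w_b: "w \<bullet> e b = 0"
    by (simp add: w_def dot_cross_self)
  have w_a: "w \<bullet> e a \<noteq> 0"
    using e(2) ab z by (auto simp: w_def inner_commute independent_triples_def)
  have "AE x in M. x \<noteq> a \<longrightarrow> h x = 0"
    using off by eventually_elim (use w_b in \<open>auto simp: h_def indicator_def\<close>)
  then have "AE x in M. h x = 0"
    using M(2) orthogonal_imp_integral_inner_eq_0[OF M(1) _ e(1) u orth, of w]
      Int_in_sets_restrict_borel[OF M(1), of "{a}"]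
    by (intro AE_eq_0_if_integral_eq_0_off_point)
      (auto simp: space_eq_if_sets_restrict_borel[OF M(1)] h_def[abs_def])
  then show ?thesis
    by eventually_elim (use ab w_a in \<open>auto simp: h_def\<close>)
qed

lemma independent_triples_orthogonal_imp_AE_eq_0:
  fixes M :: "real measure" and e :: "real \<Rightarrow> real^3" and u :: "real \<Rightarrow> real"
  assumes M: "sets M = sets (restrict_space borel \<Omega>)" "finite_measure M"
    and e: "continuous_on {0..1} e" "independent_triples e"
    and I: "cyclic_interval I" "interior I \<noteq> {}"
    and u_I: "\<And>x. x \<in> I \<inter> \<Omega> \<Longrightarrow> 0 \<le> u x" "\<And>x. x \<in> ({0..1} - I) \<inter> \<Omega> \<Longrightarrow> u x \<le> 0"
    and u: "integrable M u" and orth: "(LINT x:{0..1}|M. u x *\<^sub>R e x) = 0"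
  shows "AE x in M. x \<in> {0..1} \<longrightarrow> u x = 0"
proof -
  obtain lo hi w where lh: "lo \<in> {0..1}" "hi \<in> {0..1}" "lo \<noteq> hi"
    and w: "\<And>x. x \<in> I \<Longrightarrow> 0 \<le> w \<bullet> e x" "\<And>x. x \<in> {0..1} - I \<Longrightarrow> w \<bullet> e x \<le> 0"
      "\<And>x. x \<in> {0..1} - {lo, hi} \<Longrightarrow> w \<bullet> e x \<noteq> 0"
    using independent_triples_separating_functional[OF e I] by blast
  define h where "h x = indicator {0..1} x * (u x * (w \<bullet> e x))" for x
  have "0 \<le> u x * (w \<bullet> e x)" if "x \<in> {0..1} \<inter> \<Omega>" for x
  proof (cases "x \<in> I")
    case True
    then show ?thesis
      using u_I(1) w(1) that by simp
  next
    case False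
    then show ?thesis
      using u_I(2) w(2) that by (simp add: mult_nonpos_nonpos)
  qed
  then have "AE x in M. 0 \<le> h x"
    by (intro AE_I2) (auto simp: h_def space_eq_if_sets_restrict_borel[OF M(1)] indicator_def)
  moreover have "integrable M h" "integral\<^sup>L M h = 0"
    using orthogonal_imp_integral_inner_eq_0[OF M(1) _ e(1) u orth, of w] by (simp_all add: h_def[abs_def])
  ultimately have "AE x in M. h x = 0"
    using integral_nonneg_eq_0_iff_AE by blast
  then have off: "AE x in M. x \<in> {0..1} - {lo, hi} \<longrightarrow> u x = 0"
    by eventually_elim (use w(3) in \<open>auto simp: h_def\<close>)
  moreover have "AE x in M. x = lo \<longrightarrow> u x = 0"
    using lh off by (intro independent_triples_orthogonal_imp_AE_eq_0_at_point[OF M e u orth]) auto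
  moreover have "AE x in M. x = hi \<longrightarrow> u x = 0"
    using lh off by (intro independent_triples_orthogonal_imp_AE_eq_0_at_point[OF M e u orth, of hi lo])
      (auto simp: insert_commute)
  ultimately show ?thesis
    by eventually_elim auto
qed

theorem lemma4:
  fixes chi eta :: "real \<Rightarrow> real^3" and \<mu> :: "real measure" and f g :: "real \<Rightarrow> real"
  assumes chi_cont: "continuous_on Lam chi"
    and chi_bdd: "bounded (chi ` Lam)"
    and chi_nonneg: "\<forall>x\<in>Lam. \<forall>i. 0 \<le> chi x $ i"
    and chi_supp: "closure {x \<in> Lam. chi x \<noteq> 0} = {0..1}"
    and chi_nz: "\<forall>x\<in>{0<..<1}. chi x \<noteq> 0"
    and eta_cont: "continuous_on {0..1} eta"
    and eta_def: "\<forall>x\<in>{0<..<1}. eta x = (1 / (ones3 \<bullet> chi x)) *\<^sub>R chi x"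
    and P_int: "interior (Pcone chi) \<noteq> {}"
    and mu_sets: "sets \<mu> = sets (restrict_space borel Lam)"
    and mu_fin: "finite_measure \<mu>"
    and mt_one: "emeasure (mu_tilde chi \<mu>) Lam = 1"
    and mt_supp: "msupp (mu_tilde chi \<mu>) = {0..1}"
    and strict: "strictly_convex_locus chi eta"
    and f_int: "integrable (mu_tilde chi \<mu>) f"
    and g_int: "integrable (mu_tilde chi \<mu>) g"
    and f_one: "integral\<^sup>L (mu_tilde chi \<mu>) f = 1"
    and g_one: "integral\<^sup>L (mu_tilde chi \<mu>) g = 1"
    and sign: "changes_sign_twice (mu_tilde chi \<mu>) (\<lambda>x. f x - g x)"
  shows "c_mu chi eta \<mu> f \<noteq> c_mu chi eta \<mu> g"
proof
  assume eq: "c_mu chi eta \<mu> f = c_mu chi eta \<mu> g"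
  define M where "M = mu_tilde chi \<mu>"
  have sets: "sets M = sets (restrict_space borel Lam)"
    using mu_sets by (simp add: M_def mu_tilde_def)
  have fin: "finite_measure M"
    using mt_one space_eq_if_sets_restrict_borel[OF sets] by (intro finite_measureI) (simp add: M_def)
  have "eta ` {0..1} \<subseteq> Aplane"
    using eta_cont eta_def chi_nonneg chi_nz by (intro normalized_locus_in_Aplane) (auto simp: Lam_def)
  with strict have indep: "independent_triples eta"
    by (rule strictly_convex_locus_independent_triples)
  have orth: "(LINT x:{0..1}|M. (f x - g x) *\<^sub>R eta x) = 0"
    using eq set_integrable_scaleR_continuous[OF sets _ eta_cont] f_int g_int
    by (simp add: c_mu_def M_def scaleR_left_diff_distrib)
  obtain I where I: "cyclic_interval I" "interior I \<noteq> {}"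
      "\<forall>x\<in>I \<inter> Lam. 0 \<le> f x - g x" "\<forall>x\<in>({0..1} - I) \<inter> Lam. f x - g x \<le> 0"
    and pos: "emeasure M {x \<in> space M. 0 < f x - g x} > 0"
    using sign unfolding changes_sign_twice_def M_def by blast
  have "AE x in M. x \<in> {0..1} \<longrightarrow> f x - g x = 0"
    using I f_int g_int orth
    by (intro independent_triples_orthogonal_imp_AE_eq_0[OF sets fin eta_cont indep]) (auto simp: M_def)
  moreover have "AE x in M. x \<in> {0..1}"
    using AE_in_msupp[OF sets] mt_supp by (simp add: M_def)
  ultimately have "AE x in M. \<not> 0 < f x - g x"
    by eventually_elim auto
  moreover have "{x \<in> space M. 0 < f x - g x} \<in> sets M"
    using f_int g_int unfolding M_def by measurable
  ultimately show False
    using pos by (simp add: AE_iff_measurable)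
qed

end
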